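(* Let $Z_i=(X_i,Y_i)$, $i=1,\dots,n+1$, be i.i.d. from a distribution $\mathcal P_{XY}$ on $\mathbb R^p\times\mathbb R$ (calibration samples $Z_1,\dots,Z_n$ and test sample $Z_{n+1}$), and let $V(\cdot)$ be a fixed (non-random, data-independent) real-valued score function, $V_i=V(Z_i)$. Let $H:\mathbb R^p\times\mathbb R^p\to[0,1]$ be a localizer depending on the data only through the unordered set $\{X_1,\dots,X_{n+1}\}$, with $H(x,x)=1$; put $H_{ij}=H(X_i,X_j)$, $p^H_{ij}=H_{ij}/\sum_{k=1}^{n+1}H_{ik}$ and $\Gamma=\{\sum_{k\in I}p^H_{ik}: i\in\{1,\dots,n+1\},\ I\subseteq\{1,\dots,n+1\}\}$. For $v\in\mathbb R$ let $\hat{\mathcal F}_i(v)=\sum_{j=1}^{n}p^H_{ij}\delta_{V_j}+p^H_{i,n+1}\delta_v$ ($i=1,\dots,n+1$), and $\hat{\mathcal F}=\sum_{j=1}^{n}p^H_{n+1,j}\delta_{V_j}+p^H_{n+1,n+1}\delta_{+\infty}$. Fix $\alpha\in(0,1)$. For each $v$, let $\tilde\alpha(v)$ be the smallest $\tilde\alpha\in\Gamma$ such that $$\frac{1}{n+1}\sum_{i=1}^{n+1}\mathbb 1\{V_i\le Q(\tilde\alpha;\hat{\mathcal F}_i(v))\}\ge\alpha,$$ where in this sum $V_{n+1}$ is set equal to $v$. Set $C_V(X_{n+1})=\{v: v\le Q(\tilde\alpha(v);\hat{\mathcal F})\}$ and $C(X_{n+1})=\{y: V(X_{n+1},y)\in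 C_V(X_{n+1})\}$. Then $C_V(X_{n+1})$ is an interval, and $$\mathbb P\{V_{n+1}\in C_V(X_{n+1})\}\ge\alpha,\qquad \mathbb P\{Y_{n+1}\in C(X_{n+1})\}\ge\alpha.$$
   Context: For a distribution $\mathcal F$ on $\mathbb R\cup\{+\infty\}$, $Q(\alpha;\mathcal F)=\inf\{t:\mathbb P_{T\sim\mathcal F}(T\le t)\ge\alpha\}$; $\delta_v$ is the point mass at $v$. *)

theory Defs
  imports "HOL-Probability.Probability"
begin

text \<open>Data: \<omega> i = Z_i = (X_i, Y_i) for i = 1..n+1; index n+1 is the test point.
  Localizer H S x y, where S is the unordered set {X_1,...,X_{n+1}}.
  Score function V x y, so V_i = V X_i Y_i.\<close>

definition Xset :: "nat \<Rightarrow> (nat \<Rightarrow> 'x \<times> real) \<Rightarrow> 'x set" where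
  "Xset n \<omega> = (\<lambda>i. fst (\<omega> i)) ` {1..n+1}"

definition Hmat :: "('x set \<Rightarrow> 'x \<Rightarrow> 'x \<Rightarrow> real) \<Rightarrow> nat \<Rightarrow> (nat \<Rightarrow> 'x \<times> real) \<Rightarrow> nat \<Rightarrow> nat \<Rightarrow> real" where
  "Hmat H n \<omega> i j = H (Xset n \<omega>) (fst (\<omega> i)) (fst (\<omega> j))"

definition pH :: "('x set \<Rightarrow> 'x \<Rightarrow> 'x \<Rightarrow> real) \<Rightarrow> nat \<Rightarrow> (nat \<Rightarrow> 'x \<times> real) \<Rightarrow> nat \<Rightarrow> nat \<Rightarrow> real" where
  "pH H n \<omega> i j = Hmat H n \<omega> i j / (\<Sum>k=1..n+1. Hmat H n \<omega> i k)"

definition Gamma :: "('x set \<Rightarrow> 'x \<Rightarrow> 'x \<Rightarrow> real) \<Rightarrow> nat \<Rightarrow> (nat \<Rightarrow> 'x \<times> real) \<Rightarrow> real set" where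
  "Gamma H n \<omega> = {(\<Sum>k\<in>I. pH H n \<omega> i k) | i I. i \<in> {1..n+1} \<and> I \<subseteq> {1..n+1}}"

text \<open>Quantile Q(a; F) of the discrete distribution F = sum over j in J of w j * delta_(t j)
  on the extended reals: Inf {s. P(T \<le> s) \<ge> a}.\<close>
definition quantile :: "real \<Rightarrow> (nat \<Rightarrow> real) \<Rightarrow> (nat \<Rightarrow> ereal) \<Rightarrow> nat set \<Rightarrow> ereal" where
  "quantile a w t J = Inf {s. (\<Sum>j\<in>{j\<in>J. t j \<le> s}. w j) \<ge> a}"

definition score :: "('x \<Rightarrow> real \<Rightarrow> real) \<Rightarrow> (nat \<Rightarrow> 'x \<times> real) \<Rightarrow> nat \<Rightarrow> real" where
  "score V \<omega> i = V (fst (\<omega> i)) (snd (\<omega> i))"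

definition Fpts :: "('x \<Rightarrow> real \<Rightarrow> real) \<Rightarrow> nat \<Rightarrow> (nat \<Rightarrow> 'x \<times> real) \<Rightarrow> real \<Rightarrow> nat \<Rightarrow> ereal" where
  "Fpts V n \<omega> v j = (if j = n+1 then ereal v else ereal (score V \<omega> j))"

definition Fhatpts :: "('x \<Rightarrow> real \<Rightarrow> real) \<Rightarrow> nat \<Rightarrow> (nat \<Rightarrow> 'x \<times> real) \<Rightarrow> nat \<Rightarrow> ereal" where
  "Fhatpts V n \<omega> j = (if j = n+1 then \<infinity> else ereal (score V \<omega> j))"

definition Vaug :: "('x \<Rightarrow> real \<Rightarrow> real) \<Rightarrow> nat \<Rightarrow> (nat \<Rightarrow> 'x \<times> real) \<Rightarrow> real \<Rightarrow> nat \<Rightarrow> real" where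
  "Vaug V n \<omega> v i = (if i = n+1 then v else score V \<omega> i)"

definition alpha_ok ::
  "('x set \<Rightarrow> 'x \<Rightarrow> 'x \<Rightarrow> real) \<Rightarrow> ('x \<Rightarrow> real \<Rightarrow> real) \<Rightarrow> nat \<Rightarrow> real \<Rightarrow> (nat \<Rightarrow> 'x \<times> real) \<Rightarrow> real \<Rightarrow> real \<Rightarrow> bool" where
  "alpha_ok H V n \<alpha> \<omega> v a \<longleftrightarrow>
     (1 / real (n+1)) * (\<Sum>i=1..n+1. if ereal (Vaug V n \<omega> v i) \<le> quantile a (pH H n \<omega> i) (Fpts V n \<omega> v) {1..n+1} then 1 else 0) \<ge> \<alpha>"

definition alpha_tilde ::
  "('x set \<Rightarrow> 'x \<Rightarrow> 'x \<Rightarrow> real) \<Rightarrow> ('x \<Rightarrow> real \<Rightarrow> real) \<Rightarrow> nat \<Rightarrow> real \<Rightarrow> (nat \<Rightarrow> 'x \<times> real) \<Rightarrow> real \<Rightarrow> real" where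
  "alpha_tilde H V n \<alpha> \<omega> v = Min {a \<in> Gamma H n \<omega>. alpha_ok H V n \<alpha> \<omega> v a}"

definition CV ::
  "('x set \<Rightarrow> 'x \<Rightarrow> 'x \<Rightarrow> real) \<Rightarrow> ('x \<Rightarrow> real \<Rightarrow> real) \<Rightarrow> nat \<Rightarrow> real \<Rightarrow> (nat \<Rightarrow> 'x \<times> real) \<Rightarrow> real set" where
  "CV H V n \<alpha> \<omega> = {v. ereal v \<le> quantile (alpha_tilde H V n \<alpha> \<omega> v) (pH H n \<omega> (n+1)) (Fhatpts V n \<omega>) {1..n+1}}"

definition Cset ::
  "('x set \<Rightarrow> 'x \<Rightarrow> 'x \<Rightarrow> real) \<Rightarrow> ('x \<Rightarrow> real \<Rightarrow> real) \<Rightarrow> nat \<Rightarrow> real \<Rightarrow> (nat \<Rightarrow> 'x \<times> real) \<Rightarrow> real set" where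
  "Cset H V n \<alpha> \<omega> = {y. V (fst (\<omega> (n+1))) y \<in> CV H V n \<alpha> \<omega>}"

end

theory Submission
  imports Defs
begin

text \<open>V_i \<le> Q(a; F_i(v)) holds iff the p^H_i-mass of the atoms lying strictly below V_i is
  less than a. Raising v lowers these masses for the calibration indices and raises it for the
  test index, so the complement of C_V is closed upwards and C_V is an interval.
  For coverage evaluate everything at the true score v = V_(n+1): then V_(n+1) \<in> C_V says that
  the test index is covered at level alpha_tilde(V_(n+1)), and by the choice of alpha_tilde at
  least alpha (n+1) of the n+1 indices are covered at that level. The localizer sees the sample
  only through the unordered set of covariates, so permuting an i.i.d. sample permutes the covered
  indices; hence every index is covered with the same probability, which must be at least alpha.\<close>

lemma ereal_le_quantile_iff:
  fixes w :: "nat \<Rightarrow> real" and t :: "nat \<Rightarrow> ereal"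
  assumes J: "finite J" and w: "\<And>j. j \<in> J \<Longrightarrow> 0 \<le> w j"
  shows "ereal x \<le> quantile a w t J \<longleftrightarrow> (\<Sum>j\<in>J. if t j < ereal x then w j else 0) < a"
proof -
  define B where "B = {j\<in>J. t j < ereal x}"
  have mass_B: "(\<Sum>j\<in>J. if t j < ereal x then w j else 0) = sum w B"
    unfolding B_def using J by (simp add: sum.inter_filter)
  show ?thesis
  proof
    assume x_le: "ereal x \<le> quantile a w t J"
    \<comment> \<open>the largest atom below x, a level at which the distribution function is still below a\<close>
    define s where "s = Max (insert (-\<infinity>) (t ` B))"
    have fin: "finite (insert (-\<infinity>) (t ` B))" using J by (simp add: B_def)
    have "s < ereal x" unfolding s_def using fin by (subst Max_less_iff) (auto simp: B_def)
    moreover have "t j \<le> s" if "j \<in> B" for j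
      unfolding s_def using fin that by (intro Max_ge) auto
    ultimately have below_s: "{j\<in>J. t j \<le> s} = B" by (auto simp: B_def)
    have "\<not> a \<le> sum w B"
    proof
      assume "a \<le> sum w B"
      then have "quantile a w t J \<le> s"
        unfolding quantile_def by (intro Inf_lower) (simp add: below_s)
      with x_le \<open>s < ereal x\<close> show False by simp
    qed
    then show "(\<Sum>j\<in>J. if t j < ereal x then w j else 0) < a" using mass_B by simp
  next
    assume "(\<Sum>j\<in>J. if t j < ereal x then w j else 0) < a"
    then have B_small: "sum w B < a" using mass_B by simp
    show "ereal x \<le> quantile a w t J" unfolding quantile_def
    proof (rule Inf_greatest, rule ccontr)
      fix s assume "s \<in> {s. a \<le> (\<Sum>j\<in>{j\<in>J. t j \<le> s}. w j)}" and "\<not> ereal x \<le> s"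
      then have "a \<le> (\<Sum>j\<in>{j\<in>J. t j \<le> s}. w j)" and "{j\<in>J. t j \<le> s} \<subseteq> B"
        by (auto simp: B_def)
      moreover have "(\<Sum>j\<in>{j\<in>J. t j \<le> s}. w j) \<le> sum w B"
        using \<open>{j\<in>J. t j \<le> s} \<subseteq> B\<close> J w by (intro sum_mono2) (auto simp: B_def)
      ultimately show False using B_small by simp
    qed
  qed
qed

text \<open>mass_below H n \<omega> u i is the mass that the i-th localized distribution (weights pH i j at
  the atoms u j) puts strictly below u i; by ereal_le_quantile_iff, u i \<le> Q(a; F_i) holds iff
  i \<in> covered H n \<omega> u a.\<close>

definition mass_below ::
  "('x set \<Rightarrow> 'x \<Rightarrow> 'x \<Rightarrow> real) \<Rightarrow> nat \<Rightarrow> (nat \<Rightarrow> 'x \<times> real) \<Rightarrow> (nat \<Rightarrow> real) \<Rightarrow> nat \<Rightarrow> real" where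
  "mass_below H n \<omega> u i = (\<Sum>j=1..n+1. if u j < u i then pH H n \<omega> i j else 0)"

definition covered ::
  "('x set \<Rightarrow> 'x \<Rightarrow> 'x \<Rightarrow> real) \<Rightarrow> nat \<Rightarrow> (nat \<Rightarrow> 'x \<times> real) \<Rightarrow> (nat \<Rightarrow> real) \<Rightarrow> real \<Rightarrow> nat set" where
  "covered H n \<omega> u a = {i\<in>{1..n+1}. mass_below H n \<omega> u i < a}"

definition alpha_tilde_oracle ::
  "('x set \<Rightarrow> 'x \<Rightarrow> 'x \<Rightarrow> real) \<Rightarrow> ('x \<Rightarrow> real \<Rightarrow> real) \<Rightarrow> nat \<Rightarrow> real \<Rightarrow> (nat \<Rightarrow> 'x \<times> real) \<Rightarrow> real" where
  "alpha_tilde_oracle H V n \<alpha> \<omega> = alpha_tilde H V n \<alpha> \<omega> (score V \<omega> (n+1))"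

lemma Vaug_score: "Vaug V n \<omega> (score V \<omega> (n+1)) = score V \<omega>"
  by (auto simp: Vaug_def)

lemma Gamma_eq_image:
  "Gamma H n \<omega> = (\<lambda>(i, K). \<Sum>k\<in>K. pH H n \<omega> i k) ` ({1..n+1} \<times> Pow {1..n+1})"
  unfolding Gamma_def by (auto simp: image_def) blast

lemma finite_Gamma [simp]: "finite (Gamma H n \<omega>)"
  unfolding Gamma_eq_image by simp

locale localizer =
  fixes H :: "'x set \<Rightarrow> 'x \<Rightarrow> 'x \<Rightarrow> real"
  assumes localizer_nonneg: "0 \<le> H S x y"
    and localizer_diag_pos: "0 < H S x x"
begin

lemma pH_nonneg: "0 \<le> pH H n \<omega> i j"
  unfolding pH_def Hmat_def by (intro divide_nonneg_nonneg sum_nonneg localizer_nonneg)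

lemma Hmat_row_sum_pos:
  assumes "i \<in> {1..n+1}"
  shows "0 < (\<Sum>k=1..n+1. Hmat H n \<omega> i k)"
proof -
  have "0 < Hmat H n \<omega> i i" unfolding Hmat_def by (rule localizer_diag_pos)
  also have "\<dots> \<le> (\<Sum>k=1..n+1. Hmat H n \<omega> i k)"
    using assms by (intro member_le_sum) (auto simp: Hmat_def localizer_nonneg)
  finally show ?thesis .
qed

lemma pH_diag_pos: "i \<in> {1..n+1} \<Longrightarrow> 0 < pH H n \<omega> i i"
  unfolding pH_def using Hmat_row_sum_pos
  by (intro divide_pos_pos) (auto simp: Hmat_def localizer_diag_pos)

lemma sum_pH: "i \<in> {1..n+1} \<Longrightarrow> (\<Sum>k=1..n+1. pH H n \<omega> i k) = 1"
  unfolding pH_def using Hmat_row_sum_pos[of i n \<omega>]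
  by (simp add: sum_divide_distrib[symmetric])

lemma one_in_Gamma: "1 \<in> Gamma H n \<omega>"
  unfolding Gamma_def using sum_pH[of "n+1" n \<omega>]
  by (auto intro!: exI[of _ "n+1"] exI[of _ "{1..n+1}"])

lemma mass_below_less_1:
  assumes i: "i \<in> {1..n+1}"
  shows "mass_below H n \<omega> u i < 1"
proof -
  have "mass_below H n \<omega> u i = (\<Sum>j\<in>{1..n+1}-{i}. if u j < u i then pH H n \<omega> i j else 0)"
    unfolding mass_below_def using i by (subst sum.remove[of _ i]) auto
  also have "\<dots> \<le> (\<Sum>j\<in>{1..n+1}-{i}. pH H n \<omega> i j)"
    by (intro sum_mono) (auto simp: pH_nonneg)
  also have "\<dots> = 1 - pH H n \<omega> i i"
    using sum_pH[OF i] i by (subst sum_diff1) auto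
  also have "\<dots> < 1" using pH_diag_pos[OF i] by simp
  finally show ?thesis .
qed

lemma covered_1: "covered H n \<omega> u 1 = {1..n+1}"
  unfolding covered_def using mass_below_less_1 by auto

lemma alpha_ok_iff:
  "alpha_ok H V n \<alpha> \<omega> v a \<longleftrightarrow> \<alpha> * real (n+1) \<le> real (card (covered H n \<omega> (Vaug V n \<omega> v) a))"
proof -
  have atoms: "Fpts V n \<omega> v = (\<lambda>j. ereal (Vaug V n \<omega> v j))"
    by (auto simp: Fpts_def Vaug_def)
  have "(\<Sum>i=1..n+1. if ereal (Vaug V n \<omega> v i) \<le> quantile a (pH H n \<omega> i) (Fpts V n \<omega> v) {1..n+1}
          then 1 else 0) = (\<Sum>i=1..n+1. if mass_below H n \<omega> (Vaug V n \<omega> v) i < a then 1 else (0::real))"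
    unfolding atoms mass_below_def by (subst ereal_le_quantile_iff) (auto simp: pH_nonneg)
  also have "\<dots> = real (card (covered H n \<omega> (Vaug V n \<omega> v) a))"
    unfolding covered_def real_of_card by (rule sum.inter_filter[symmetric]) simp
  finally show ?thesis unfolding alpha_ok_def by (simp add: field_simps)
qed

context
  fixes \<alpha> :: real
  assumes \<alpha>_le_1: "\<alpha> \<le> 1"
begin

lemma alpha_tilde_feasible:
  "alpha_tilde H V n \<alpha> \<omega> v \<in> {a \<in> Gamma H n \<omega>. alpha_ok H V n \<alpha> \<omega> v a}"
proof -
  have "1 \<in> {a \<in> Gamma H n \<omega>. alpha_ok H V n \<alpha> \<omega> v a}"
    using one_in_Gamma \<alpha>_le_1 by (simp add: alpha_ok_iff covered_1)
  then show ?thesis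
    unfolding alpha_tilde_def by (intro Min_in) auto
qed

lemma alpha_tilde_le:
  "a \<in> Gamma H n \<omega> \<Longrightarrow> alpha_ok H V n \<alpha> \<omega> v a \<Longrightarrow> alpha_tilde H V n \<alpha> \<omega> v \<le> a"
  unfolding alpha_tilde_def by (intro Min_le) auto

lemma less_alpha_tilde_iff:
  "x < alpha_tilde H V n \<alpha> \<omega> v \<longleftrightarrow>
    (\<forall>i\<in>{1..n+1}. \<forall>K\<in>Pow {1..n+1}.
       alpha_ok H V n \<alpha> \<omega> v (\<Sum>k\<in>K. pH H n \<omega> i k) \<longrightarrow> x < (\<Sum>k\<in>K. pH H n \<omega> i k))"
proof -
  have "x < alpha_tilde H V n \<alpha> \<omega> v \<longleftrightarrow> (\<forall>a\<in>Gamma H n \<omega>. alpha_ok H V n \<alpha> \<omega> v a \<longrightarrow> x < a)"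
    using alpha_tilde_feasible[of V n \<omega> v] unfolding alpha_tilde_def by (subst Min_gr_iff) auto
  then show ?thesis unfolding Gamma_eq_image by auto
qed

lemma mem_CV_iff:
  "v \<in> CV H V n \<alpha> \<omega> \<longleftrightarrow> mass_below H n \<omega> (Vaug V n \<omega> v) (n+1) < alpha_tilde H V n \<alpha> \<omega> v"
proof -
  have "(\<Sum>j=1..n+1. if Fhatpts V n \<omega> j < ereal v then pH H n \<omega> (n+1) j else 0)
       = mass_below H n \<omega> (Vaug V n \<omega> v) (n+1)"
    unfolding mass_below_def by (intro sum.cong) (auto simp: Fhatpts_def Vaug_def)
  then show ?thesis
    unfolding CV_def by (subst ereal_le_quantile_iff) (auto simp: pH_nonneg)
qed

text \<open>Raising v enlarges the set of indices covered at the level alpha_tilde v, so alpha_tilde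
  can only decrease, while the mass below the test score increases.\<close>
lemma not_mem_CV_mono:
  assumes "v < w" and "v \<notin> CV H V n \<alpha> \<omega>"
  shows "w \<notin> CV H V n \<alpha> \<omega>"
proof -
  define a where "a = alpha_tilde H V n \<alpha> \<omega> v"
  have mass_v: "a \<le> mass_below H n \<omega> (Vaug V n \<omega> v) (n+1)"
    using assms(2) by (simp add: mem_CV_iff a_def)
  have mass_vw: "mass_below H n \<omega> (Vaug V n \<omega> v) (n+1) \<le> mass_below H n \<omega> (Vaug V n \<omega> w) (n+1)"
    unfolding mass_below_def using \<open>v < w\<close>
    by (intro sum_mono) (auto simp: Vaug_def pH_nonneg)
  have mass_wv: "mass_below H n \<omega> (Vaug V n \<omega> w) i \<le> mass_below H n \<omega> (Vaug V n \<omega> v) i"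
    if "i \<noteq> n+1" for i
    unfolding mass_below_def using that \<open>v < w\<close>
    by (intro sum_mono) (auto simp: Vaug_def pH_nonneg)
  have "covered H n \<omega> (Vaug V n \<omega> v) a \<subseteq> covered H n \<omega> (Vaug V n \<omega> w) a"
  proof
    fix i assume i: "i \<in> covered H n \<omega> (Vaug V n \<omega> v) a"
    then have "i \<noteq> n+1" using mass_v by (auto simp: covered_def)
    then show "i \<in> covered H n \<omega> (Vaug V n \<omega> w) a"
      using i mass_wv[of i] by (auto simp: covered_def)
  qed
  then have "card (covered H n \<omega> (Vaug V n \<omega> v) a) \<le> card (covered H n \<omega> (Vaug V n \<omega> w) a)"
    by (intro card_mono) (auto simp: covered_def)
  moreover have "a \<in> Gamma H n \<omega>" and "alpha_ok H V n \<alpha> \<omega> v a"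
    using alpha_tilde_feasible by (auto simp: a_def)
  ultimately have "alpha_ok H V n \<alpha> \<omega> w a"
    unfolding alpha_ok_iff by linarith
  with \<open>a \<in> Gamma H n \<omega>\<close> have "alpha_tilde H V n \<alpha> \<omega> w \<le> a"
    by (rule alpha_tilde_le)
  then show ?thesis
    using mass_v mass_vw unfolding mem_CV_iff a_def by linarith
qed

lemma is_interval_CV: "is_interval (CV H V n \<alpha> \<omega>)"
  unfolding is_interval_1
proof (intro ballI allI impI, rule ccontr)
  fix u w x assume "u \<in> CV H V n \<alpha> \<omega>" "w \<in> CV H V n \<alpha> \<omega>" "u \<le> x \<and> x \<le> w"
    and x: "x \<notin> CV H V n \<alpha> \<omega>"
  then have "x < w" by (metis order_less_le)
  with x show False using \<open>w \<in> CV H V n \<alpha> \<omega>\<close> not_mem_CV_mono by blast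
qed

lemma mem_CV_score_iff:
  "score V \<omega> (n+1) \<in> CV H V n \<alpha> \<omega> \<longleftrightarrow> n+1 \<in> covered H n \<omega> (score V \<omega>) (alpha_tilde_oracle H V n \<alpha> \<omega>)"
  unfolding mem_CV_iff alpha_tilde_oracle_def Vaug_score covered_def by simp

lemma card_covered_oracle_ge:
  "\<alpha> * real (n+1) \<le> real (card (covered H n \<omega> (score V \<omega>) (alpha_tilde_oracle H V n \<alpha> \<omega>)))"
  using alpha_tilde_feasible[of V n \<omega> "score V \<omega> (n+1)"]
  unfolding alpha_tilde_oracle_def alpha_ok_iff Vaug_score by simp

end

end

context
  fixes n :: nat and \<tau> :: "nat \<Rightarrow> nat" and \<omega> \<omega>' :: "nat \<Rightarrow> 'x \<times> real"
  assumes \<tau>: "\<tau> permutes {1..n+1}"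
    and \<omega>': "\<And>k. k \<in> {1..n+1} \<Longrightarrow> \<omega>' k = \<omega> (\<tau> k)"
begin

lemma Xset_permute: "Xset n \<omega>' = Xset n \<omega>"
proof -
  have "Xset n \<omega>' = (\<lambda>i. fst (\<omega> i)) ` \<tau> ` {1..n+1}"
    unfolding Xset_def image_image using \<omega>' by simp
  then show ?thesis unfolding permutes_image[OF \<tau>] Xset_def .
qed

lemma Hmat_permute:
  "i \<in> {1..n+1} \<Longrightarrow> j \<in> {1..n+1} \<Longrightarrow> Hmat H n \<omega>' i j = Hmat H n \<omega> (\<tau> i) (\<tau> j)"
  unfolding Hmat_def Xset_permute using \<omega>' by simp

lemma pH_permute:
  assumes "i \<in> {1..n+1}" "j \<in> {1..n+1}"
  shows "pH H n \<omega>' i j = pH H n \<omega> (\<tau> i) (\<tau> j)"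
proof -
  have "(\<Sum>k=1..n+1. Hmat H n \<omega>' i k) = (\<Sum>k=1..n+1. Hmat H n \<omega> (\<tau> i) (\<tau> k))"
    using assms by (intro sum.cong) (auto simp: Hmat_permute)
  also have "\<dots> = (\<Sum>k=1..n+1. Hmat H n \<omega> (\<tau> i) k)"
    using sum.permute[OF \<tau>, symmetric] by (simp add: comp_def)
  finally show ?thesis
    unfolding pH_def using assms by (simp add: Hmat_permute)
qed

lemma Gamma_permute: "Gamma H n \<omega>' = Gamma H n \<omega>"
proof -
  let ?I = "{1..n+1}" and ?mass = "\<lambda>(i, K). \<Sum>k\<in>K. pH H n \<omega> i k"
  have "Gamma H n \<omega>' = (\<lambda>(i, K). \<Sum>k\<in>K. pH H n \<omega> (\<tau> i) (\<tau> k)) ` (?I \<times> Pow ?I)"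
    unfolding Gamma_eq_image
    by (intro image_cong refl) (auto intro!: sum.cong simp: pH_permute subset_iff)
  also have "\<dots> = ?mass ` map_prod \<tau> (image \<tau>) ` (?I \<times> Pow ?I)"
    unfolding image_image
    by (intro image_cong refl) (auto simp: sum.reindex permutes_inj_on[OF \<tau>])
  also have "map_prod \<tau> (image \<tau>) ` (?I \<times> Pow ?I) = ?I \<times> Pow ?I"
    using permutes_image[OF \<tau>] bij_betw_Pow[OF permutes_imp_bij[OF \<tau>]]
    by (intro map_prod_surj_on) (auto simp: bij_betw_def)
  finally show ?thesis unfolding Gamma_eq_image .
qed

lemma mass_below_permute:
  assumes u': "\<And>k. k \<in> {1..n+1} \<Longrightarrow> u' k = u (\<tau> k)" and i: "i \<in> {1..n+1}"
  shows "mass_below H n \<omega>' u' i = mass_below H n \<omega> u (\<tau> i)"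
proof -
  have "mass_below H n \<omega>' u' i
      = (\<Sum>j=1..n+1. ((\<lambda>j. if u j < u (\<tau> i) then pH H n \<omega> (\<tau> i) j else 0) \<circ> \<tau>) j)"
    unfolding mass_below_def using u' i by (intro sum.cong) (auto simp: pH_permute)
  also have "\<dots> = mass_below H n \<omega> u (\<tau> i)"
    unfolding mass_below_def by (rule sum.permute[OF \<tau>, symmetric])
  finally show ?thesis .
qed

lemma card_covered_permute:
  assumes u': "\<And>k. k \<in> {1..n+1} \<Longrightarrow> u' k = u (\<tau> k)"
  shows "card (covered H n \<omega>' u' a) = card (covered H n \<omega> u a)"
proof -
  have "covered H n \<omega>' u' a = \<tau> -` covered H n \<omega> u a"
  proof (intro set_eqI)
    fix i
    have "\<tau> i \<in> {1..n+1} \<longleftrightarrow> i \<in> {1..n+1}" by (rule permutes_in_image[OF \<tau>])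
    then show "i \<in> covered H n \<omega>' u' a \<longleftrightarrow> i \<in> \<tau> -` covered H n \<omega> u a"
      unfolding covered_def using mass_below_permute[where u=u, OF u', of i] by auto
  qed
  then show ?thesis
    using permutes_inj[OF \<tau>] permutes_surj[OF \<tau>] by (simp add: card_vimage_inj)
qed

end

context localizer
begin

lemma alpha_tilde_oracle_permute:
  assumes \<tau>: "\<tau> permutes {1..n+1}" and \<omega>': "\<And>k. k \<in> {1..n+1} \<Longrightarrow> \<omega>' k = \<omega> (\<tau> k)"
  shows "alpha_tilde_oracle H V n \<alpha> \<omega>' = alpha_tilde_oracle H V n \<alpha> \<omega>"
proof -
  have "score V \<omega>' k = score V \<omega> (\<tau> k)" if "k \<in> {1..n+1}" for k
    using \<omega>'[OF that] by (simp add: score_def)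
  then have "card (covered H n \<omega>' (score V \<omega>') a) = card (covered H n \<omega> (score V \<omega>) a)" for a
    using \<tau> \<omega>' by (intro card_covered_permute)
  then have "alpha_ok H V n \<alpha> \<omega>' (score V \<omega>' (n+1)) a \<longleftrightarrow> alpha_ok H V n \<alpha> \<omega> (score V \<omega> (n+1)) a"
    for a by (simp only: alpha_ok_iff Vaug_score)
  moreover have "Gamma H n \<omega>' = Gamma H n \<omega>"
    using \<tau> \<omega>' by (rule Gamma_permute)
  ultimately show ?thesis
    unfolding alpha_tilde_oracle_def alpha_tilde_def by simp
qed

lemma mem_covered_oracle_permute:
  assumes \<tau>: "\<tau> permutes {1..n+1}" and \<omega>': "\<And>k. k \<in> {1..n+1} \<Longrightarrow> \<omega>' k = \<omega> (\<tau> k)"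
    and k: "k \<in> {1..n+1}"
  shows "k \<in> covered H n \<omega>' (score V \<omega>') (alpha_tilde_oracle H V n \<alpha> \<omega>')
    \<longleftrightarrow> \<tau> k \<in> covered H n \<omega> (score V \<omega>) (alpha_tilde_oracle H V n \<alpha> \<omega>)"
proof -
  have "score V \<omega>' j = score V \<omega> (\<tau> j)" if "j \<in> {1..n+1}" for j
    using \<omega>'[OF that] by (simp add: score_def)
  then have "mass_below H n \<omega>' (score V \<omega>') k = mass_below H n \<omega> (score V \<omega>) (\<tau> k)"
    using \<tau> \<omega>' k by (intro mass_below_permute)
  moreover have "alpha_tilde_oracle H V n \<alpha> \<omega>' = alpha_tilde_oracle H V n \<alpha> \<omega>"
    using \<tau> \<omega>' by (rule alpha_tilde_oracle_permute)
  moreover have "\<tau> k \<in> {1..n+1}" using permutes_in_image[OF \<tau>] k by simp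
  ultimately show ?thesis
    unfolding covered_def using k by simp
qed

end

lemma borel_measurable_pH:
  assumes Hmat: "\<And>i j. i \<in> {1..n+1} \<Longrightarrow> j \<in> {1..n+1} \<Longrightarrow> (\<lambda>\<omega>. Hmat H n \<omega> i j) \<in> borel_measurable M"
    and "i \<in> {1..n+1}" "j \<in> {1..n+1}"
  shows "(\<lambda>\<omega>. pH H n \<omega> i j) \<in> borel_measurable M"
  unfolding pH_def using assms by (intro borel_measurable_divide borel_measurable_sum) auto

lemma borel_measurable_mass_below:
  assumes Hmat: "\<And>i j. i \<in> {1..n+1} \<Longrightarrow> j \<in> {1..n+1} \<Longrightarrow> (\<lambda>\<omega>. Hmat H n \<omega> i j) \<in> borel_measurable M"
    and u: "\<And>j. j \<in> {1..n+1} \<Longrightarrow> (\<lambda>\<omega>. u \<omega> j) \<in> borel_measurable M"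
    and i: "i \<in> {1..n+1}"
  shows "(\<lambda>\<omega>. mass_below H n \<omega> (u \<omega>) i) \<in> borel_measurable M"
  unfolding mass_below_def
proof (intro borel_measurable_sum)
  fix j assume j: "j \<in> {1..n+1}"
  show "(\<lambda>\<omega>. if u \<omega> j < u \<omega> i then pH H n \<omega> i j else 0) \<in> borel_measurable M"
    using borel_measurable_pH[OF Hmat i j] borel_measurable_less[OF u[OF j] u[OF i]]
    by (intro measurable_If borel_measurable_const)
qed

lemma borel_measurable_card_covered:
  assumes Hmat: "\<And>i j. i \<in> {1..n+1} \<Longrightarrow> j \<in> {1..n+1} \<Longrightarrow> (\<lambda>\<omega>. Hmat H n \<omega> i j) \<in> borel_measurable M"
    and u: "\<And>j. j \<in> {1..n+1} \<Longrightarrow> (\<lambda>\<omega>. u \<omega> j) \<in> borel_measurable M"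
    and a: "a \<in> borel_measurable M"
  shows "(\<lambda>\<omega>. real (card (covered H n \<omega> (u \<omega>) (a \<omega>)))) \<in> borel_measurable M"
proof -
  have "real (card (covered H n \<omega> (u \<omega>) (a \<omega>)))
      = (\<Sum>i=1..n+1. if mass_below H n \<omega> (u \<omega>) i < a \<omega> then 1 else 0)" for \<omega>
    unfolding covered_def real_of_card by (rule sum.inter_filter) simp
  moreover have "(\<lambda>\<omega>. \<Sum>i=1..n+1. if mass_below H n \<omega> (u \<omega>) i < a \<omega> then 1 else 0::real)
      \<in> borel_measurable M"
    using borel_measurable_mass_below[OF Hmat u] a
    by (intro borel_measurable_sum measurable_If borel_measurable_const borel_measurable_less) auto
  ultimately show ?thesis by simp
qed

lemma (in localizer) sets_covered_oracle:
  assumes "\<alpha> \<le> 1"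
    and Hmat: "\<And>i j. i \<in> {1..n+1} \<Longrightarrow> j \<in> {1..n+1} \<Longrightarrow> (\<lambda>\<omega>. Hmat H n \<omega> i j) \<in> borel_measurable M"
    and score: "\<And>j. j \<in> {1..n+1} \<Longrightarrow> (\<lambda>\<omega>. score V \<omega> j) \<in> borel_measurable M"
    and i: "i \<in> {1..n+1}"
  shows "{\<omega> \<in> space M. i \<in> covered H n \<omega> (score V \<omega>) (alpha_tilde_oracle H V n \<alpha> \<omega>)} \<in> sets M"
proof -
  let ?I = "{1..n+1}"
  define mass where "mass j K \<omega> = (\<Sum>k\<in>K. pH H n \<omega> j k)" for j K \<omega>
  have mass_meas: "mass j K \<in> borel_measurable M" if "j \<in> ?I" "K \<in> Pow ?I" for j K
    unfolding mass_def using that by (intro borel_measurable_sum borel_measurable_pH[OF Hmat]) auto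
  \<comment> \<open>alpha_tilde is a minimum over a data-dependent finite set; bounding it from below quantifies
    over the fixed finite index set instead\<close>
  have "{\<omega> \<in> space M. i \<in> covered H n \<omega> (score V \<omega>) (alpha_tilde_oracle H V n \<alpha> \<omega>)}
      = {\<omega> \<in> space M. \<forall>j\<in>?I. \<forall>K\<in>Pow ?I.
           \<alpha> * real (n+1) \<le> real (card (covered H n \<omega> (score V \<omega>) (mass j K \<omega>)))
           \<longrightarrow> mass_below H n \<omega> (score V \<omega>) i < mass j K \<omega>}"
    unfolding covered_def alpha_tilde_oracle_def less_alpha_tilde_iff[OF \<open>\<alpha> \<le> 1\<close>]
      alpha_ok_iff Vaug_score mass_def using i by simp
  also have "\<dots> \<in> sets M"
    using mass_meas borel_measurable_card_covered[OF Hmat score mass_meas]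
      borel_measurable_mass_below[OF Hmat score i]
    by (intro sets.sets_Collect_finite_All sets.sets_Collect_imp borel_measurable_less
        borel_measurable_le borel_measurable_const borel_measurable_times) auto
  finally show ?thesis .
qed

lemma (in prob_space) sum_prob_ge_if_card_ge:
  assumes I: "finite I" and A: "\<And>i. i \<in> I \<Longrightarrow> A i \<in> events"
    and card: "\<And>x. x \<in> space M \<Longrightarrow> c \<le> real (card {i\<in>I. x \<in> A i})"
  shows "c \<le> (\<Sum>i\<in>I. prob (A i))"
proof -
  have integrable: "integrable M (indicator (A i) :: _ \<Rightarrow> real)" if "i \<in> I" for i
    using A[OF that] emeasure_finite[of "A i"] by (simp add: less_top[symmetric])
  have "c = expectation (\<lambda>_. c)" by (simp add: prob_space)
  also have "\<dots> \<le> expectation (\<lambda>x. \<Sum>i\<in>I. indicator (A i) x)"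
  proof (rule integral_mono[OF integrable_const Bochner_Integration.integrable_sum[OF integrable]])
    fix x assume "x \<in> space M"
    have "real (card {i\<in>I. x \<in> A i}) = (\<Sum>i\<in>I. indicator (A i) x)"
      unfolding real_of_card using I by (simp add: sum.inter_filter indicator_def Int_def)
    then show "c \<le> (\<Sum>i\<in>I. indicator (A i) x)"
      using card[OF \<open>x \<in> space M\<close>] by simp
  qed auto
  also have "\<dots> = (\<Sum>i\<in>I. prob (A i \<inter> space M))"
    using integrable by (simp add: Bochner_Integration.integral_sum)
  also have "\<dots> = (\<Sum>i\<in>I. prob (A i))"
    using A by (intro sum.cong) (auto simp: sets.Int_space_eq2)
  finally show ?thesis .
qed

lemma (in prob_space) prob_ge_if_card_ge_equiprobable:
  assumes I: "finite I" and j: "j \<in> I" and A: "\<And>i. i \<in> I \<Longrightarrow> A i \<in> events"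
    and equiprobable: "\<And>i. i \<in> I \<Longrightarrow> prob (A i) = prob (A j)"
    and card: "\<And>x. x \<in> space M \<Longrightarrow> c * real (card I) \<le> real (card {i\<in>I. x \<in> A i})"
  shows "c \<le> prob (A j)"
proof -
  have "c * real (card I) \<le> (\<Sum>i\<in>I. prob (A i))"
    using I A card by (rule sum_prob_ge_if_card_ge)
  also have "\<dots> = real (card I) * prob (A j)"
    using equiprobable by simp
  finally have "c * real (card I) \<le> prob (A j) * real (card I)"
    by (simp add: mult.commute)
  moreover have "0 < real (card I)"
    using I j by (auto simp: card_gt_0_iff)
  ultimately show ?thesis
    by (rule mult_right_le_imp_le)
qed

lemma measurable_score_PiM:
  assumes "case_prod V \<in> borel_measurable P" and "i \<in> I"
  shows "(\<lambda>\<omega>. score V \<omega> i) \<in> borel_measurable (PiM I (\<lambda>_. P))"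
proof -
  have "(\<lambda>\<omega>. case_prod V (\<omega> i)) \<in> borel_measurable (PiM I (\<lambda>_. P))"
    using measurable_component_singleton[OF assms(2)] assms(1) by (rule measurable_compose)
  then show ?thesis unfolding score_def by (simp add: case_prod_beta)
qed

lemma measure_PiM_equivariant_eq:
  fixes P :: "'a measure" and I :: "'i set"
  assumes P: "prob_space P" and i: "i \<in> I" and j: "j \<in> I"
    and event: "{\<omega> \<in> space (PiM I (\<lambda>_. P)). Q \<omega> j} \<in> sets (PiM I (\<lambda>_. P))"
    and equivariant: "\<And>\<tau> \<omega> k. \<tau> permutes I \<Longrightarrow> \<omega> \<in> space (PiM I (\<lambda>_. P)) \<Longrightarrow> k \<in> I \<Longrightarrow>
        Q (\<lambda>k\<in>I. \<omega> (\<tau> k)) k \<longleftrightarrow> Q \<omega> (\<tau> k)"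
  shows "measure (PiM I (\<lambda>_. P)) {\<omega> \<in> space (PiM I (\<lambda>_. P)). Q \<omega> i}
       = measure (PiM I (\<lambda>_. P)) {\<omega> \<in> space (PiM I (\<lambda>_. P)). Q \<omega> j}"
proof -
  let ?M = "PiM I (\<lambda>_. P)"
  define \<tau> where "\<tau> = Transposition.transpose i j"
  define T where "T \<omega> = (\<lambda>k\<in>I. \<omega> (\<tau> k))" for \<omega> :: "'i \<Rightarrow> 'a"
  have \<tau>: "\<tau> permutes I" unfolding \<tau>_def using i j by (rule permutes_swap_id)
  have T: "T \<in> measurable ?M ?M"
    unfolding T_def using permutes_in_image[OF \<tau>]
    by (intro measurable_restrict measurable_component_singleton) auto
  have "distr ?M ?M T = ?M"
    unfolding T_def using P permutes_inj_on[OF \<tau>] permutes_in_image[OF \<tau>]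
    by (intro distr_PiM_reindex) auto
  moreover have "{\<omega> \<in> space ?M. Q \<omega> i} = T -` {\<omega> \<in> space ?M. Q \<omega> j} \<inter> space ?M"
    using measurable_space[OF T] equivariant[OF \<tau> _ j] by (auto simp: T_def \<tau>_def)
  ultimately show ?thesis
    using measure_distr[OF T event] by simp
qed

lemma (in localizer) prob_test_covered_ge:
  fixes P :: "('x \<times> real) measure"
  assumes P: "prob_space P" and "\<alpha> \<le> 1"
    and V_meas: "case_prod V \<in> borel_measurable P"
    and H_meas: "\<And>i j. i \<in> {1..n+1} \<Longrightarrow> j \<in> {1..n+1} \<Longrightarrow>
        (\<lambda>\<omega>. Hmat H n \<omega> i j) \<in> borel_measurable (PiM {1..n+1} (\<lambda>_. P))"
  shows "\<alpha> \<le> measure (PiM {1..n+1} (\<lambda>_. P)) {\<omega> \<in> space (PiM {1..n+1} (\<lambda>_. P)).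
    n+1 \<in> covered H n \<omega> (score V \<omega>) (alpha_tilde_oracle H V n \<alpha> \<omega>)}"
proof -
  let ?I = "{1..n+1}" and ?M = "PiM {1..n+1} (\<lambda>_. P)"
  interpret M: prob_space ?M using P by (rule prob_space_PiM)
  define Cov where "Cov \<omega> i \<longleftrightarrow> i \<in> covered H n \<omega> (score V \<omega>) (alpha_tilde_oracle H V n \<alpha> \<omega>)"
    for \<omega> i
  define E where "E i = {\<omega> \<in> space ?M. Cov \<omega> i}" for i
  have events: "E i \<in> M.events" if "i \<in> ?I" for i
    unfolding E_def Cov_def using \<open>\<alpha> \<le> 1\<close> H_meas measurable_score_PiM[OF V_meas] that
    by (intro sets_covered_oracle) auto
  have equivariant: "Cov (\<lambda>k\<in>?I. \<omega> (\<tau> k)) k \<longleftrightarrow> Cov \<omega> (\<tau> k)"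
    if "\<tau> permutes ?I" "\<omega> \<in> space ?M" "k \<in> ?I" for \<tau> \<omega> k
    unfolding Cov_def using that by (intro mem_covered_oracle_permute) auto
  have same_prob: "M.prob (E i) = M.prob (E (n+1))" if "i \<in> ?I" for i
    using events[of "n+1"] unfolding E_def
    by (intro measure_PiM_equivariant_eq[where Q=Cov, OF P that _ _ equivariant]) auto
  have "\<alpha> \<le> M.prob (E (n+1))"
  proof (rule M.prob_ge_if_card_ge_equiprobable[where A=E, OF _ _ events same_prob])
    fix \<omega> assume "\<omega> \<in> space ?M"
    then have "{i\<in>?I. \<omega> \<in> E i} = covered H n \<omega> (score V \<omega>) (alpha_tilde_oracle H V n \<alpha> \<omega>)"
      by (auto simp: E_def Cov_def covered_def)
    then show "\<alpha> * real (card ?I) \<le> real (card {i\<in>?I. \<omega> \<in> E i})"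
      using card_covered_oracle_ge \<open>\<alpha> \<le> 1\<close> by simp
  qed auto
  then show ?thesis
    unfolding E_def Cov_def .
qed

theorem lemma1:
  fixes P :: "((real ^ ('p::finite)) \<times> real) measure"
    and V :: "real ^ 'p \<Rightarrow> real \<Rightarrow> real"
    and H :: "(real ^ 'p) set \<Rightarrow> real ^ 'p \<Rightarrow> real ^ 'p \<Rightarrow> real"
    and n :: nat and \<alpha> :: real
  assumes P: "prob_space P" and sets_P: "sets P = sets borel"
    and V_meas: "case_prod V \<in> borel_measurable borel"
    and H_range: "\<And>S x y. 0 \<le> H S x y \<and> H S x y \<le> 1"
    and H_diag: "\<And>S x. H S x x = 1"
    and H_meas: "\<And>i j. i \<in> {1..n+1} \<Longrightarrow> j \<in> {1..n+1} \<Longrightarrow>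
        (\<lambda>\<omega>. Hmat H n \<omega> i j) \<in> borel_measurable (PiM {1..n+1} (\<lambda>_. P))"
    and \<alpha>: "0 < \<alpha>" "\<alpha> < 1"
  shows "(\<forall>\<omega>\<in>space (PiM {1..n+1} (\<lambda>_. P)). is_interval (CV H V n \<alpha> \<omega>))
    \<and> measure (PiM {1..n+1} (\<lambda>_. P))
        {\<omega> \<in> space (PiM {1..n+1} (\<lambda>_. P)). score V \<omega> (n+1) \<in> CV H V n \<alpha> \<omega>} \<ge> \<alpha>
    \<and> measure (PiM {1..n+1} (\<lambda>_. P))
        {\<omega> \<in> space (PiM {1..n+1} (\<lambda>_. P)). snd (\<omega> (n+1)) \<in> Cset H V n \<alpha> \<omega>} \<ge> \<alpha>"
proof -
  interpret localizer H using H_range H_diag by unfold_locales auto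
  have "case_prod V \<in> borel_measurable P"
    using V_meas measurable_cong_sets[OF sets_P refl] by blast
  then have "\<alpha> \<le> measure (PiM {1..n+1} (\<lambda>_. P)) {\<omega> \<in> space (PiM {1..n+1} (\<lambda>_. P)).
      n+1 \<in> covered H n \<omega> (score V \<omega>) (alpha_tilde_oracle H V n \<alpha> \<omega>)}"
    using P \<alpha>(2) H_meas by (intro prob_test_covered_ge) auto
  moreover have "score V \<omega> (n+1) \<in> CV H V n \<alpha> \<omega> \<longleftrightarrow>
      n+1 \<in> covered H n \<omega> (score V \<omega>) (alpha_tilde_oracle H V n \<alpha> \<omega>)" for \<omega>
    using \<alpha>(2) by (intro mem_CV_score_iff) simp
  moreover have "snd (\<omega> (n+1)) \<in> Cset H V n \<alpha> \<omega> \<longleftrightarrow> score V \<omega> (n+1) \<in> CV H V n \<alpha> \<omega>" for \<omega>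
    by (simp add: Cset_def score_def)
  ultimately show ?thesis
    using is_interval_CV \<alpha>(2) by simp
qed

end
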